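(* Let $r\ge5$. If $T$ is a $K_r$-tree then $\langle T\rangle_{K_r}=T$, i.e., $T$ is $K_r$-stable.
   Context: A graph $T$ is a $K_r$-tree of order $\vartheta$ if it is the union of $\vartheta$ copies $H_1,\dots,H_\vartheta$ of $K_r$ such that, for every $1<i\le\vartheta$, $H_i$ shares exactly one edge with $H_1\cup\cdots\cup H_{i-1}$ (the common vertices being exactly the two endpoints of that edge). For a graph $G$, the $K_r$-dynamics repeatedly adds an edge $e$ between two vertices of $G$ whenever there is a copy of $K_r$ in which $e$ is the only edge not yet present; $\langle G\rangle_{K_r}$ is the final graph. *)

theory Defs
  imports Main
begin

text \<open>Simple graphs are given by a vertex set V :: 'a set and an edge set
  E :: 'a set set, every edge being a 2-element subset of V.\<close>

definition pairs_of :: "'a set \<Rightarrow> 'a set set" where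
  "pairs_of S = {e. e \<subseteq> S \<and> card e = 2}"

text \<open>A copy of K_r is determined by its r-element vertex set H; its edges are pairs_of H.
  A K_r-tree of order theta: union of theta copies H_1..H_theta of K_r (here the list Hs,
  indexed from 0) such that each H_i (i > 0) shares exactly one edge with the union of the
  previous copies, the common vertices being exactly the two endpoints of that edge.\<close>

definition Kr_tree :: "nat \<Rightarrow> nat \<Rightarrow> 'a set \<Rightarrow> 'a set set \<Rightarrow> bool" where
  "Kr_tree r \<theta> V E \<longleftrightarrow> (\<exists>Hs :: 'a set list.
      length Hs = \<theta> \<and> \<theta> \<ge> 1 \<and>
      (\<forall>H \<in> set Hs. finite H \<and> card H = r) \<and>
      V = \<Union>(set Hs) \<and> E = \<Union>(pairs_of ` set Hs) \<and>
      (\<forall>i. 0 < i \<and> i < \<theta> \<longrightarrow>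
         (\<exists>u v. u \<noteq> v \<and>
            pairs_of (Hs ! i) \<inter> \<Union>(pairs_of ` set (take i Hs)) = {{u, v}} \<and>
            Hs ! i \<inter> \<Union>(set (take i Hs)) = {u, v})))"

inductive_set Kr_closure :: "nat \<Rightarrow> 'a set \<Rightarrow> 'a set set \<Rightarrow> 'a set set"
  for r :: nat and V :: "'a set" and E :: "'a set set" where
  base: "e \<in> E \<Longrightarrow> e \<in> Kr_closure r V E"
| step: "\<lbrakk> S \<subseteq> V; finite S; card S = r; e \<in> pairs_of S;
           \<forall>f \<in> pairs_of S - {e}. f \<in> Kr_closure r V E \<rbrakk>
         \<Longrightarrow> e \<in> Kr_closure r V E"

end

theory Submission
  imports Defs
begin

text \<open>Distinct copies of K_r in a K_r-tree share at most two vertices, and every clique of the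
  tree lies inside a single copy: a clique not contained in the newest copy has a vertex outside
  it, so all its vertices, and then all its edges, lie in the earlier copies, since the newest
  copy meets them only in the gluing edge. In a K_r-dynamics step on an r-set S that misses only
  the edge ab, the cliques S - a and S - b therefore lie in copies sharing the r - 2 \<ge> 3
  vertices of S - {a, b}; so they are one copy, which already contains ab.\<close>

definition glued_along_edges :: "'a set list \<Rightarrow> bool" where
  "glued_along_edges Hs \<longleftrightarrow> (\<forall>i. 0 < i \<and> i < length Hs \<longrightarrow>
     (\<exists>u v. u \<noteq> v \<and>
        pairs_of (Hs ! i) \<inter> \<Union>(pairs_of ` set (take i Hs)) = {{u, v}} \<and>
        Hs ! i \<inter> \<Union>(set (take i Hs)) = {u, v}))"

lemma Kr_tree_iff_glued:
  "Kr_tree r \<theta> V E \<longleftrightarrow> (\<exists>Hs. length Hs = \<theta> \<and> \<theta> \<ge> 1 \<and>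
      (\<forall>H \<in> set Hs. finite H \<and> card H = r) \<and>
      V = \<Union>(set Hs) \<and> E = \<Union>(pairs_of ` set Hs) \<and> glued_along_edges Hs)"
  unfolding Kr_tree_def glued_along_edges_def by (intro ex_cong1) auto

lemma doubleton_in_pairs_of_iff:
  "x \<noteq> y \<Longrightarrow> {x, y} \<in> pairs_of S \<longleftrightarrow> x \<in> S \<and> y \<in> S"
  by (auto simp: pairs_of_def)

lemma pairs_of_eq_doubleton:
  assumes "e \<in> pairs_of S" "e \<subseteq> {u, v}"
  shows "e = {u, v}"
proof (rule card_seteq)
  show "card {u, v} \<le> card e"
    using assms(1) by (simp add: pairs_of_def card_insert_le_m1)
qed (use assms(2) in auto)

lemma pairs_of_nonempty:
  assumes "2 \<le> card K"
  shows "pairs_of K \<noteq> {}"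
proof -
  obtain e where "e \<subseteq> K" "card e = 2"
    using obtain_subset_with_card_n[OF assms] .
  then show ?thesis by (auto simp: pairs_of_def)
qed

lemma pairs_of_Diff_subset:
  "a \<in> e \<Longrightarrow> pairs_of (S - {a}) \<subseteq> pairs_of S - {e}"
  by (auto simp: pairs_of_def)

lemma glued_along_edges_snoc:
  "glued_along_edges (xs @ [H]) \<longleftrightarrow> glued_along_edges xs \<and>
     (xs \<noteq> [] \<longrightarrow> (\<exists>u v. u \<noteq> v \<and>
        pairs_of H \<inter> \<Union>(pairs_of ` set xs) = {{u, v}} \<and> H \<inter> \<Union>(set xs) = {u, v}))"
  (is "?lhs \<longleftrightarrow> ?rhs")
proof -
  have prefix: "(xs @ [H]) ! i = xs ! i \<and> take i (xs @ [H]) = take i xs" if "i < length xs" for i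
    using that by (simp add: nth_append)
  have last: "(xs @ [H]) ! length xs = H \<and> take (length xs) (xs @ [H]) = xs"
    by simp
  show ?thesis
  proof
    assume glued: ?lhs
    have "glued_along_edges xs"
      unfolding glued_along_edges_def
    proof (intro allI impI)
      fix i assume i: "0 < i \<and> i < length xs"
      then show "\<exists>u v. u \<noteq> v \<and>
          pairs_of (xs ! i) \<inter> \<Union>(pairs_of ` set (take i xs)) = {{u, v}} \<and>
          xs ! i \<inter> \<Union>(set (take i xs)) = {u, v}"
        using glued[unfolded glued_along_edges_def, rule_format, of i] prefix[of i] i by simp
    qed
    moreover have "xs \<noteq> [] \<longrightarrow> (\<exists>u v. u \<noteq> v \<and>
        pairs_of H \<inter> \<Union>(pairs_of ` set xs) = {{u, v}} \<and> H \<inter> \<Union>(set xs) = {u, v})"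
      using glued[unfolded glued_along_edges_def, rule_format, of "length xs"] last by simp
    ultimately show ?rhs ..
  next
    assume rhs: ?rhs
    show ?lhs
      unfolding glued_along_edges_def
    proof (intro allI impI)
      fix i assume i: "0 < i \<and> i < length (xs @ [H])"
      show "\<exists>u v. u \<noteq> v \<and>
          pairs_of ((xs @ [H]) ! i) \<inter> \<Union>(pairs_of ` set (take i (xs @ [H]))) = {{u, v}} \<and>
          (xs @ [H]) ! i \<inter> \<Union>(set (take i (xs @ [H]))) = {u, v}"
      proof (cases "i < length xs")
        case True
        then show ?thesis
          using rhs[THEN conjunct1, unfolded glued_along_edges_def, rule_format, of i] prefix[of i] i
          by simp
      next
        case False
        then have "i = length xs" "xs \<noteq> []" using i by auto
        then show ?thesis using rhs last by simp
      qed
    qed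
  qed
qed

lemma glued_copies_share_at_most_two:
  assumes "glued_along_edges Hs" "i < j" "j < length Hs"
  shows "card (Hs ! i \<inter> Hs ! j) \<le> 2"
proof -
  obtain u v where uv: "Hs ! j \<inter> \<Union>(set (take j Hs)) = {u, v}"
    using assms(1)[unfolded glued_along_edges_def, rule_format, of j] assms(2,3) by auto
  have "take j Hs ! i = Hs ! i" "i < length (take j Hs)"
    using assms(2,3) by auto
  then have "Hs ! i \<in> set (take j Hs)" by (metis nth_mem)
  with uv have "Hs ! i \<inter> Hs ! j \<subseteq> {u, v}" by blast
  then have "card (Hs ! i \<inter> Hs ! j) \<le> card {u, v}" by (intro card_mono) auto
  also have "\<dots> \<le> 2" by (simp add: card_insert_le_m1)
  finally show ?thesis .
qed

lemma glued_copies_eq_if_three_common: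
  assumes "glued_along_edges Hs" "H1 \<in> set Hs" "H2 \<in> set Hs" "3 \<le> card (H1 \<inter> H2)"
  shows "H1 = H2"
proof -
  obtain i j where ij: "i < length Hs" "H1 = Hs ! i" "j < length Hs" "H2 = Hs ! j"
    using assms(2,3) unfolding in_set_conv_nth by blast
  then show ?thesis
  proof (cases i j rule: linorder_cases)
    case less
    then show ?thesis using glued_copies_share_at_most_two[OF assms(1) less] ij assms(4) by simp
  next
    case greater
    then show ?thesis
      using glued_copies_share_at_most_two[OF assms(1) greater] ij assms(4)
      by (simp add: Int_commute)
  qed (use ij in simp)
qed

lemma clique_in_glued_copy:
  assumes "glued_along_edges Hs" "2 \<le> card K" "pairs_of K \<subseteq> \<Union>(pairs_of ` set Hs)"
  shows "\<exists>H \<in> set Hs. K \<subseteq> H"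
  using assms(1,3)
proof (induction Hs rule: rev_induct)
  case Nil
  then show ?case using pairs_of_nonempty[OF assms(2)] by simp
next
  case (snoc H xs)
  show ?case
  proof (cases "K \<subseteq> H")
    case True
    then show ?thesis by auto
  next
    case False
    then obtain y where y: "y \<in> K" "y \<notin> H" by auto
    have other: "\<exists>w \<in> K. w \<noteq> x" if "x \<in> K" for x
    proof -
      have "finite K" using assms(2) card.infinite by fastforce
      then have "card (K - {x}) = card K - 1" using that by simp
      then have "0 < card (K - {x})" using assms(2) by simp
      then have "K - {x} \<noteq> {}" by (simp add: card_gt_0_iff)
      then show ?thesis by blast
    qed
    have K_in_xs: "K \<subseteq> \<Union>(set xs)"
    proof
      fix x assume x: "x \<in> K"
      obtain w where w: "w \<in> K" "w \<noteq> x" "y \<in> {x, w}"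
        using other[OF x] y(1) by (cases "x = y") auto
      then have "{x, w} \<in> pairs_of K" using x by (simp add: doubleton_in_pairs_of_iff)
      moreover have "{x, w} \<notin> pairs_of H"
        using w y(2) by (auto simp: doubleton_in_pairs_of_iff)
      ultimately have "{x, w} \<in> \<Union>(pairs_of ` set xs)" using snoc.prems(2) by auto
      then show "x \<in> \<Union>(set xs)" by (auto simp: pairs_of_def)
    qed
    with y have "xs \<noteq> []" by auto
    with snoc.prems(1) have glued_xs: "glued_along_edges xs" and "\<exists>u v. u \<noteq> v \<and>
        pairs_of H \<inter> \<Union>(pairs_of ` set xs) = {{u, v}} \<and> H \<inter> \<Union>(set xs) = {u, v}"
      by (simp_all add: glued_along_edges_snoc)
    then obtain u v where uv:
        "pairs_of H \<inter> \<Union>(pairs_of ` set xs) = {{u, v}}" "H \<inter> \<Union>(set xs) = {u, v}"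
      by blast
    have "pairs_of K \<subseteq> \<Union>(pairs_of ` set xs)"
    proof
      fix e assume e: "e \<in> pairs_of K"
      show "e \<in> \<Union>(pairs_of ` set xs)"
      proof (cases "e \<in> pairs_of H")
        case True
        then have "e \<subseteq> H" "e \<subseteq> K" using e by (simp_all add: pairs_of_def)
        then have "e \<subseteq> {u, v}" using K_in_xs uv(2) by blast
        then have "e = {u, v}" using pairs_of_eq_doubleton[OF e] by simp
        then show ?thesis using uv(1) by auto
      next
        case False
        then show ?thesis using e snoc.prems(2) by auto
      qed
    qed
    then show ?thesis using snoc.IH glued_xs by auto
  qed
qed

lemma Kr_closure_glued_copies:
  assumes "glued_along_edges Hs" "\<forall>H \<in> set Hs. finite H" "5 \<le> r"
  shows "Kr_closure r V (\<Union>(pairs_of ` set Hs)) = \<Union>(pairs_of ` set Hs)"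
proof -
  let ?E = "\<Union>(pairs_of ` set Hs)"
  have "e \<in> ?E" if "e \<in> Kr_closure r V ?E" for e
    using that
  proof (induction rule: Kr_closure.induct)
    case (base e)
    then show ?case .
  next
    case (step S e)
    obtain a b where ab: "e = {a, b}" "a \<noteq> b" "a \<in> S" "b \<in> S"
      using step.hyps(4) by (auto simp: pairs_of_def card_2_iff)
    have copy_without: "\<exists>H \<in> set Hs. S - {x} \<subseteq> H" if "x \<in> e" for x
    proof (rule clique_in_glued_copy[OF assms(1)])
      show "2 \<le> card (S - {x})"
        using that ab step.hyps(2,3) assms(3) by auto
      show "pairs_of (S - {x}) \<subseteq> ?E"
        using pairs_of_Diff_subset[OF that] step.IH by blast
    qed
    obtain H1 where H1: "H1 \<in> set Hs" "S - {a} \<subseteq> H1"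
      using copy_without[of a] ab(1) by blast
    obtain H2 where H2: "H2 \<in> set Hs" "S - {b} \<subseteq> H2"
      using copy_without[of b] ab(1) by blast
    have "r - 2 = card (S - {a, b})"
      using ab step.hyps(2,3) by (simp add: card_Diff_subset)
    also have "\<dots> \<le> card (H1 \<inter> H2)"
      using H1 H2 assms(2) by (intro card_mono) auto
    finally have "H1 = H2"
      using glued_copies_eq_if_three_common[OF assms(1) H1(1) H2(1)] assms(3) by simp
    then have "e \<in> pairs_of H1"
      using H1 H2 ab by (auto simp: doubleton_in_pairs_of_iff)
    then show ?case using H1(1) by blast
  qed
  then show ?thesis by (auto intro: Kr_closure.base)
qed

theorem lemma4p13:
  fixes r \<theta> :: nat and V :: "'a set" and E :: "'a set set"
  assumes "r \<ge> 5" and "Kr_tree r \<theta> V E"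
  shows "Kr_closure r V E = E"
proof -
  obtain Hs where "\<forall>H \<in> set Hs. finite H \<and> card H = r" "E = \<Union>(pairs_of ` set Hs)"
      "glued_along_edges Hs"
    using assms(2) unfolding Kr_tree_iff_glued by blast
  then show ?thesis using Kr_closure_glued_copies[of Hs r V] assms(1) by simp
qed

end
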